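(* For every integer $r\geq 9$, the Coxeter polynomial of the Nakayama algebra $N_{r+7}(r)$ is $$\chi_{(r+7,r)}(\lambda)=(\lambda+1)(\lambda^6-\lambda^3+1)(\lambda^r+1).$$ Consequently, the Coxeter number of $N_{r+7}(r)$ equals $\mathrm{lcm}(2r,9)$.
   Context: $N_n(r)$ is the path algebra over an algebraically closed field $k$ of the quiver $1\leftarrow2\leftarrow\cdots\leftarrow n$ modulo the ideal generated by all paths of length $r$. For a finite-dimensional algebra $\Lambda$ with indecomposable projectives $P(1),\dots,P(n)$, the Cartan matrix $C$ has entries $c_{ij}=\dim_k\mathrm{Hom}_\Lambda(P(i),P(j))$; the Coxeter matrix is $\phi_\Lambda=-C^{-t}C$; the Coxeter polynomial is $\det(\lambda E_n-\phi_\Lambda)$; the Coxeter number is the least $m\geq1$ with $\phi_\Lambda^m=E_n$ (identity matrix). *)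

theory Defs
  imports "Jordan_Normal_Form.Char_Poly" "Jordan_Normal_Form.Gauss_Jordan_Elimination"
begin

text \<open>Cartan matrix of the Nakayama algebra N_n(r) = k[1 <- 2 <- ... <- n]/(paths of length r).
  Vertices i = 1..n are represented by indices i-1 = 0..n-1.  The entry c_ij is the
  dimension of Hom(P(i),P(j)), which is 1 if there is a nonzero path between the two vertices
  (from j down to i, i.e. i <= j and j - i < r) and 0 otherwise.\<close>
definition nakayama_cartan :: "nat \<Rightarrow> nat \<Rightarrow> rat mat" where
  "nakayama_cartan n r = mat n n (\<lambda>(i, j). if i \<le> j \<and> j - i < r then 1 else 0)"

definition coxeter_matrix :: "rat mat \<Rightarrow> rat mat" where
  "coxeter_matrix C = - ((the (mat_inverse (transpose_mat C))) * C)"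

definition coxeter_polynomial :: "rat mat \<Rightarrow> rat poly" where
  "coxeter_polynomial C = char_poly (coxeter_matrix C)"

definition is_coxeter_number :: "rat mat \<Rightarrow> nat \<Rightarrow> bool" where
  "is_coxeter_number C m \<longleftrightarrow>
     m \<ge> 1 \<and> coxeter_matrix C ^\<^sub>m m = 1\<^sub>m (dim_row C) \<and>
     (\<forall>k. 1 \<le> k \<and> k < m \<longrightarrow> coxeter_matrix C ^\<^sub>m k \<noteq> 1\<^sub>m (dim_row C))"

end

theory Submission
  imports Defs
begin

(* For n \<le> 2r the transposed Cartan matrix of N_n(r) is 1 + S + ... + S^(r-1) for the nilpotent
   shift S, so its inverse is the band matrix (1 - S)(1 + S^r) and the Coxeter matrix is an explicit
   sparse matrix. For n = r + 7 its orbits of e_7 - e_6 (of length r) and of e_0 + e_r (of length 7)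
   form a basis in which it is block diagonal, with the companion matrices of x^r + 1 and of
   (x + 1)(x^6 - x^3 + 1) as blocks; this gives the Coxeter polynomial.
   A companion matrix C has e_0 as a cyclic vector, so C^k = 1 iff C^k e_0 = e_0. The first block
   sends e_0 to -e_0 after r steps, the second after 9 steps, and neither sends e_0 to +-e_0 earlier,
   so the blocks have orders 2r and 18 and the Coxeter number is lcm(2r, 18) = lcm(2r, 9). *)

lemma pow_mat_add:
  assumes "A \<in> carrier_mat n n"
  shows "A ^\<^sub>m (a + b) = A ^\<^sub>m a * A ^\<^sub>m b"
proof (induction b)
  case (Suc b)
  have "A ^\<^sub>m (a + Suc b) = (A ^\<^sub>m a * A ^\<^sub>m b) * A"
    using Suc by simp
  also have "\<dots> = A ^\<^sub>m a * A ^\<^sub>m Suc b"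
    using assms by (simp add: assoc_mult_mat[of _ n n _ n _ n])
  finally show ?case .
qed (use assms in simp)

lemma pow_mat_commute:
  assumes "A \<in> carrier_mat n n"
  shows "A ^\<^sub>m a * A ^\<^sub>m b = A ^\<^sub>m b * A ^\<^sub>m a"
  by (metis add.commute assms pow_mat_add)

lemma pow_mat_Suc_mult_vec:
  assumes "A \<in> carrier_mat n n" and "v \<in> carrier_vec n"
  shows "A ^\<^sub>m Suc k *\<^sub>v v = A *\<^sub>v (A ^\<^sub>m k *\<^sub>v v)"
proof -
  have "A ^\<^sub>m Suc k = A * A ^\<^sub>m k"
    using pow_mat_add[OF assms(1), of 1 k] assms(1) by simp
  then show ?thesis
    using assms by (simp only:) (rule assoc_mult_mat_vec, auto)
qed

lemma mult_mat_vec_unit_vec: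
  fixes A :: "'a :: semiring_1 mat"
  assumes "A \<in> carrier_mat nr n" and "j < n"
  shows "A *\<^sub>v unit_vec n j = col A j"
proof (rule eq_vecI)
  fix i assume "i < dim_vec (col A j)"
  with assms show "(A *\<^sub>v unit_vec n j) $ i = col A j $ i"
    by (simp add: carrier_matD)
qed (use assms in simp)

lemma mat_inverse_eq_SomeI:
  fixes A B :: "'a :: field mat"
  assumes A: "A \<in> carrier_mat n n" and B: "B \<in> carrier_mat n n" and BA: "B * A = 1\<^sub>m n"
  shows "mat_inverse A = Some B"
proof (cases "mat_inverse A")
  case None
  have "A * B = 1\<^sub>m n"
    using mat_mult_left_right_inverse[OF B A BA] .
  then have "A \<in> Units (ring_mat TYPE('a) n undefined)"
    using A B BA by (auto simp: Units_def ring_mat_def)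
  with mat_inverse(1)[OF A None, of undefined] show ?thesis
    by blast
next
  case (Some B')
  then have B': "B' \<in> carrier_mat n n" and AB': "A * B' = 1\<^sub>m n"
    using mat_inverse(2)[OF A] by auto
  have "B = B * (A * B')"
    using B by (simp add: AB')
  also have "\<dots> = B'"
    using A B B' by (simp flip: assoc_mult_mat[of B n n A n B' n] add: BA)
  finally show ?thesis
    using Some by simp
qed

lemma similar_mat_if_mult_eq:
  fixes A B P :: "'a :: field mat"
  assumes A: "A \<in> carrier_mat n n" and B: "B \<in> carrier_mat n n" and P: "P \<in> carrier_mat n n"
    and "det P \<noteq> 0" and AP: "A * P = P * B"
  shows "similar_mat A B"
proof -
  obtain Q where Q: "Q \<in> carrier_mat n n" and QP: "Q * P = 1\<^sub>m n" and PQ: "P * Q = 1\<^sub>m n"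
    using det_non_zero_imp_unit[OF P \<open>det P \<noteq> 0\<close>, of undefined] by (auto simp: Units_def ring_mat_def)
  have "A = A * (P * Q)"
    using A by (simp add: PQ)
  also have "\<dots> = P * B * Q"
    using A P Q B by (simp flip: assoc_mult_mat[of A n n P n Q n] add: AP)
  finally have "A = P * B * Q" .
  with A B P Q PQ QP show ?thesis
    by (intro similar_matI[of A B P Q n]) simp_all
qed

lemma similar_mat_pow_eq_one_iff:
  assumes "similar_mat A B"
  shows "A ^\<^sub>m k = 1\<^sub>m (dim_row A) \<longleftrightarrow> B ^\<^sub>m k = 1\<^sub>m (dim_row A)"
proof -
  obtain n P Q where carr: "{A, B, P, Q} \<subseteq> carrier_mat n n"
    and PQ: "P * Q = 1\<^sub>m n" and QP: "Q * P = 1\<^sub>m n" and "A = P * B * Q"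
    using similar_matD[OF assms] by blast
  then have wit: "similar_mat_wit A B P Q"
    unfolding similar_mat_wit_def Let_def by auto
  have "A ^\<^sub>m k = P * B ^\<^sub>m k * Q" "B ^\<^sub>m k = Q * A ^\<^sub>m k * P"
    using similar_mat_wit_pow_id similar_mat_wit_sym wit by blast+
  then show ?thesis
    using carr PQ QP by auto
qed

lemma char_poly_four_block_diag:
  fixes A B :: "'a :: idom mat"
  assumes A: "A \<in> carrier_mat n n" and B: "B \<in> carrier_mat m m"
  shows "char_poly (four_block_mat A (0\<^sub>m n m) (0\<^sub>m m n) B) = char_poly A * char_poly B"
proof -
  have "char_poly_matrix (four_block_mat A (0\<^sub>m n m) (0\<^sub>m m n) B)
      = four_block_mat (char_poly_matrix A) (0\<^sub>m n m) (0\<^sub>m m n) (char_poly_matrix B)"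
    using A B by (intro eq_matI) (auto simp: char_poly_matrix_def)
  then show ?thesis
    unfolding char_poly_def using A B by (simp add: det_four_block_mat_upper_right_zero[of _ n _ m])
qed

lemma four_block_diag_eq_iff:
  assumes "A \<in> carrier_mat n n" "B \<in> carrier_mat m m" "A' \<in> carrier_mat n n" "B' \<in> carrier_mat m m"
  shows "four_block_mat A (0\<^sub>m n m) (0\<^sub>m m n) B = four_block_mat A' (0\<^sub>m n m) (0\<^sub>m m n) B'
    \<longleftrightarrow> A = A' \<and> B = B'"
proof
  assume eq: "four_block_mat A (0\<^sub>m n m) (0\<^sub>m m n) B = four_block_mat A' (0\<^sub>m n m) (0\<^sub>m m n) B'"
  have "A $$ (i, j) = A' $$ (i, j)" if "i < n" "j < n" for i j
    using arg_cong[OF eq, of "\<lambda>M. M $$ (i, j)"] that assms by simp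
  moreover have "B $$ (i, j) = B' $$ (i, j)" if "i < m" "j < m" for i j
    using arg_cong[OF eq, of "\<lambda>M. M $$ (n + i, n + j)"] that assms by simp
  ultimately show "A = A' \<and> B = B'"
    using assms by (auto intro!: eq_matI)
qed simp

lemma pow_four_block_diag_eq_one_iff:
  assumes A: "A \<in> carrier_mat n n" and B: "B \<in> carrier_mat m m"
  shows "four_block_mat A (0\<^sub>m n m) (0\<^sub>m m n) B ^\<^sub>m k = 1\<^sub>m (n + m)
    \<longleftrightarrow> A ^\<^sub>m k = 1\<^sub>m n \<and> B ^\<^sub>m k = 1\<^sub>m m"
proof -
  have "four_block_mat A (0\<^sub>m n m) (0\<^sub>m m n) B ^\<^sub>m k
      = four_block_mat (A ^\<^sub>m k) (0\<^sub>m n m) (0\<^sub>m m n) (B ^\<^sub>m k)"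
    using A B by (rule pow_four_block_mat)
  then show ?thesis
    using A B by (simp flip: four_block_one_mat add: four_block_diag_eq_iff)
qed

lemma pow_mat_mult_vec_eigen:
  fixes A :: "'a :: field mat"
  assumes A: "A \<in> carrier_mat n n" and v: "v \<in> carrier_vec n" and eigen: "A ^\<^sub>m N *\<^sub>v v = a \<cdot>\<^sub>v v"
  shows "A ^\<^sub>m (N * q + s) *\<^sub>v v = a ^ q \<cdot>\<^sub>v (A ^\<^sub>m s *\<^sub>v v)"
proof (induction q)
  case (Suc q)
  have "A ^\<^sub>m (N * Suc q + s) = A ^\<^sub>m (N * q + s) * A ^\<^sub>m N"
    by (simp add: pow_mat_add[OF A, symmetric] algebra_simps)
  then have "A ^\<^sub>m (N * Suc q + s) *\<^sub>v v = A ^\<^sub>m (N * q + s) *\<^sub>v (a \<cdot>\<^sub>v v)"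
    using assoc_mult_mat_vec[OF pow_carrier_mat[OF A] pow_carrier_mat[OF A] v] eigen by simp
  also have "\<dots> = a \<cdot>\<^sub>v (A ^\<^sub>m (N * q + s) *\<^sub>v v)"
    using A v by (intro mult_mat_vec) auto
  finally show ?case
    using Suc by (simp add: smult_smult_assoc mult.commute)
qed simp

lemma pow_mat_mult_vec_eq_self_iff:
  fixes A :: "'a :: field_char_0 mat"
  assumes A: "A \<in> carrier_mat n n" and v: "v \<in> carrier_vec n" "v \<noteq> 0\<^sub>v n"
    and anti: "A ^\<^sub>m N *\<^sub>v v = (-1) \<cdot>\<^sub>v v"
    and early: "\<And>s. 0 < s \<Longrightarrow> s < N \<Longrightarrow> A ^\<^sub>m s *\<^sub>v v \<noteq> v \<and> A ^\<^sub>m s *\<^sub>v v \<noteq> (-1) \<cdot>\<^sub>v v"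
  shows "A ^\<^sub>m k *\<^sub>v v = v \<longleftrightarrow> 2 * N dvd k"
proof -
  obtain i where i: "i < n" "v $ i \<noteq> 0"
    using v by (metis eq_vecI carrier_vecD index_zero_vec)
  have smult_eq_self: "c \<cdot>\<^sub>v v = v \<longleftrightarrow> c = 1" for c :: 'a
  proof
    assume "c \<cdot>\<^sub>v v = v"
    then have "c * v $ i = v $ i"
      using i v by (metis index_smult_vec(1) carrier_vecD)
    then show "c = 1"
      using i by simp
  qed simp
  have N: "0 < N"
    using anti smult_eq_self[of "-1"] A v by (cases N) auto
  define q s where "q = k div N" and "s = k mod N"
  have k: "k = N * q + s" and s: "s < N"
    using N by (simp_all add: q_def s_def)
  have pow: "A ^\<^sub>m k *\<^sub>v v = (-1) ^ q \<cdot>\<^sub>v (A ^\<^sub>m s *\<^sub>v v)"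
    unfolding k by (rule pow_mat_mult_vec_eigen[OF A v(1) anti])
  show ?thesis
  proof (cases "s = 0")
    case True
    then have "A ^\<^sub>m k *\<^sub>v v = v \<longleftrightarrow> even q"
      using pow A v by (simp add: smult_eq_self minus_one_power_iff)
    also have "\<dots> \<longleftrightarrow> 2 * N dvd k"
      using N unfolding k True by auto
    finally show ?thesis .
  next
    case False
    have "A ^\<^sub>m k *\<^sub>v v \<noteq> v"
    proof
      assume "A ^\<^sub>m k *\<^sub>v v = v"
      have "(-1 :: 'a) ^ q * (-1) ^ q = 1"
        by (simp add: minus_one_power_iff)
      then have "A ^\<^sub>m s *\<^sub>v v = (-1) ^ q \<cdot>\<^sub>v ((-1) ^ q \<cdot>\<^sub>v (A ^\<^sub>m s *\<^sub>v v))"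
        by (simp only: smult_smult_assoc one_smult_vec)
      then have "A ^\<^sub>m s *\<^sub>v v = (-1) ^ q \<cdot>\<^sub>v v"
        using pow \<open>A ^\<^sub>m k *\<^sub>v v = v\<close> by simp
      then show False
        using early[of s] False s by (cases "even q") auto
    qed
    moreover have "\<not> 2 * N dvd k"
      using False unfolding s_def by (metis dvd_mult_right dvd_imp_mod_0)
    ultimately show ?thesis
      by simp
  qed
qed

lemma neq_unit_vec_0_if_index:
  assumes "0 < i" "i < m" "w $ i \<noteq> 0"
  shows "w \<noteq> unit_vec m 0 \<and> w \<noteq> (-1 :: 'a :: ring_1) \<cdot>\<^sub>v unit_vec m 0"
  using assms by auto

lemma sum_lessThan_if_add_eq:
  fixes d i n :: nat
  assumes "i < n + d"
  shows "(\<Sum>k<n. if k + d = i then f k else 0) = (if d \<le> i then f (i - d) else 0)"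
proof -
  have "(\<Sum>k<n. if k + d = i then f k else 0) = (\<Sum>k<n. if k = i - d then (if d \<le> i then f k else 0) else 0)"
    by (intro sum.cong) auto
  then show ?thesis
    using assms by (auto simp: less_diff_conv2)
qed

section \<open>Companion matrices\<close>

definition companion_mat :: "nat \<Rightarrow> (nat \<Rightarrow> 'a :: ring_1) \<Rightarrow> 'a mat" where
  "companion_mat m c = mat m m (\<lambda>(i, j). (if i = Suc j then 1 else 0) - (if Suc j = m then c i else 0))"

lemma companion_mat_carrier [simp]: "companion_mat m c \<in> carrier_mat m m"
  by (simp add: companion_mat_def)

lemma companion_mat_dim [simp]:
  "dim_row (companion_mat m c) = m" "dim_col (companion_mat m c) = m"
  by (simp_all add: companion_mat_def)

lemma companion_mat_mult_vec:
  assumes "v \<in> carrier_vec m" and "i < m"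
  shows "(companion_mat m c *\<^sub>v v) $ i = (if i = 0 then 0 else v $ (i - 1)) - c i * v $ (m - 1)"
proof -
  have "(companion_mat m c *\<^sub>v v) $ i
      = (\<Sum>j<m. if j + 1 = i then v $ j else 0) - (\<Sum>j<m. if j + 1 = m then c i * v $ j else 0)"
    using assms by (simp add: companion_mat_def scalar_prod_def atLeast0LessThan left_diff_distrib
        sum_subtractf eq_commute[of i] if_distrib[of "\<lambda>x. x * _"] cong: if_cong)
  also have "\<dots> = (if i = 0 then 0 else v $ (i - 1)) - c i * v $ (m - 1)"
    using assms(2) by (simp only: sum_lessThan_if_add_eq trans_less_add1 less_add_one) auto
  finally show ?thesis .
qed

lemma companion_mat_mult_unit_vec:
  assumes "Suc j < m"
  shows "companion_mat m c *\<^sub>v unit_vec m j = unit_vec m (Suc j)"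
  using assms by (auto simp: mult_mat_vec_unit_vec companion_mat_def intro!: eq_vecI)

lemma companion_mat_mult_last_unit_vec:
  assumes "0 < m"
  shows "companion_mat m c *\<^sub>v unit_vec m (m - 1) = - vec m c"
  using assms by (auto simp: mult_mat_vec_unit_vec companion_mat_def intro!: eq_vecI)

lemma companion_mat_pow_unit_vec:
  assumes "j < m"
  shows "companion_mat m c ^\<^sub>m j *\<^sub>v unit_vec m 0 = unit_vec m j"
  using assms
proof (induction j)
  case (Suc j)
  have "companion_mat m c ^\<^sub>m Suc j *\<^sub>v unit_vec m 0
      = companion_mat m c *\<^sub>v (companion_mat m c ^\<^sub>m j *\<^sub>v unit_vec m 0)"
    by (rule pow_mat_Suc_mult_vec[of _ m]) simp_all
  then show ?case
    using Suc by (simp add: companion_mat_mult_unit_vec)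
qed simp

lemma companion_mat_pow_size_unit_vec:
  "companion_mat m c ^\<^sub>m m *\<^sub>v unit_vec m 0 = - vec m c"
proof (cases m)
  case (Suc k)
  have "companion_mat m c ^\<^sub>m m *\<^sub>v unit_vec m 0
      = companion_mat m c *\<^sub>v (companion_mat m c ^\<^sub>m k *\<^sub>v unit_vec m 0)"
    unfolding Suc by (rule pow_mat_Suc_mult_vec[of _ "Suc k"]) simp_all
  then show ?thesis
    using Suc companion_mat_mult_last_unit_vec[of "Suc k" c]
    by (simp add: companion_mat_pow_unit_vec)
qed (auto intro!: eq_vecI)

lemma companion_mat_pow_eq_one_iff:
  assumes "0 < m"
  shows "companion_mat m c ^\<^sub>m k = 1\<^sub>m m \<longleftrightarrow> companion_mat m c ^\<^sub>m k *\<^sub>v unit_vec m 0 = unit_vec m 0"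
proof
  let ?C = "companion_mat m c"
  assume fix0: "?C ^\<^sub>m k *\<^sub>v unit_vec m 0 = unit_vec m 0"
  have "col (?C ^\<^sub>m k) j = col (1\<^sub>m m) j" if j: "j < m" for j
  proof -
    have "col (?C ^\<^sub>m k) j = ?C ^\<^sub>m k *\<^sub>v (?C ^\<^sub>m j *\<^sub>v unit_vec m 0)"
      using j by (simp add: companion_mat_pow_unit_vec
          mult_mat_vec_unit_vec[OF pow_carrier_mat[OF companion_mat_carrier] j])
    also have "\<dots> = ?C ^\<^sub>m j *\<^sub>v (?C ^\<^sub>m k *\<^sub>v unit_vec m 0)"
      by (metis assoc_mult_mat_vec companion_mat_carrier pow_carrier_mat pow_mat_commute unit_vec_carrier)
    also have "\<dots> = col (1\<^sub>m m) j"
      using j by (simp add: fix0 companion_mat_pow_unit_vec)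
    finally show ?thesis .
  qed
  then show "?C ^\<^sub>m k = 1\<^sub>m m"
    by (intro mat_col_eqI) auto
qed simp

lemma char_poly_matrix_dim [simp]:
  "dim_row (char_poly_matrix A) = dim_row A" "dim_col (char_poly_matrix A) = dim_col A"
  by (simp_all add: char_poly_matrix_def)

lemma char_poly_matrix_companion_mat:
  assumes "i < m" and "j < m"
  shows "char_poly_matrix (companion_mat m c) $$ (i, j)
    = (if i = j then [:0, 1:] else 0) - (if i = Suc j then 1 else 0) + (if Suc j = m then [:c i:] else 0)"
  using assms by (auto simp: char_poly_matrix_def companion_mat_def one_pCons)

lemma mat_delete_char_poly_matrix_companion_mat_0_0:
  "mat_delete (char_poly_matrix (companion_mat (Suc m) c)) 0 0
    = char_poly_matrix (companion_mat m (\<lambda>i. c (Suc i)))"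
  by (intro eq_matI) (simp_all add: mat_delete_def char_poly_matrix_companion_mat)

lemma det_mat_delete_char_poly_matrix_companion_mat_0_last:
  "det (mat_delete (char_poly_matrix (companion_mat (Suc m) c)) 0 m) = (-1) ^ m"
proof -
  let ?D = "mat_delete (char_poly_matrix (companion_mat (Suc m) c)) 0 m"
  have D: "?D \<in> carrier_mat m m"
    by (simp add: carrier_matI)
  have entry: "?D $$ (a, b) = (if b = Suc a then [:0, 1:] else 0) - (if a = b then 1 else 0)"
    if "a < m" "b < m" for a b
    using that by (auto simp: mat_delete_def char_poly_matrix_companion_mat)
  have "upper_triangular ?D"
    using D entry by (auto simp: upper_triangular_def)
  then have "det ?D = (\<Prod>a = 0..<m. ?D $$ (a, a))"
    using D by (simp add: det_upper_triangular prod_list_diag_prod)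
  also have "\<dots> = (-1) ^ m"
    using entry by simp
  finally show ?thesis .
qed

lemma char_poly_companion_mat:
  "char_poly (companion_mat m (c :: nat \<Rightarrow> 'a :: comm_ring_1)) = monom 1 m + (\<Sum>i<m. monom (c i) i)"
proof (induction m arbitrary: c)
  case 0
  show ?case
    by (simp add: char_poly_def det_def companion_mat_def char_poly_matrix_def)
next
  case (Suc m)
  let ?M = "char_poly_matrix (companion_mat (Suc m) c)"
  have row0: "?M $$ (0, j) = (if j = 0 then [:0, 1:] else 0) + (if j = m then [:c 0:] else 0)"
    if "j < Suc m" for j
    using that by (auto simp: char_poly_matrix_companion_mat)
  have cofactor_last: "cofactor ?M 0 m = 1"
    by (simp add: cofactor_def det_mat_delete_char_poly_matrix_companion_mat_0_last flip: power_add)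
  have cofactor_first: "cofactor ?M 0 0 = char_poly (companion_mat m (\<lambda>i. c (Suc i)))"
    by (simp add: cofactor_def mat_delete_char_poly_matrix_companion_mat_0_0 char_poly_def)
  have "char_poly (companion_mat (Suc m) c) = (\<Sum>j<Suc m. ?M $$ (0, j) * cofactor ?M 0 j)"
    unfolding char_poly_def by (rule laplace_expansion_row[of _ "Suc m"]) auto
  also have "\<dots> = [:0, 1:] * cofactor ?M 0 0 + [:c 0:] * cofactor ?M 0 m"
    by (simp add: row0 distrib_right sum.distrib if_distrib[of "\<lambda>x. x * _"] cong: if_cong)
  also have "\<dots> = [:0, 1:] * (monom 1 m + (\<Sum>i<m. monom (c (Suc i)) i)) + [:c 0:]"
    by (simp only: cofactor_first cofactor_last Suc.IH mult_1_right)
  also have "\<dots> = monom 1 (Suc m) + (\<Sum>i<Suc m. monom (c i) i)"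
    by (simp add: sum.lessThan_Suc_shift distrib_left sum_distrib_left monom_Suc monom_0
        del: sum.lessThan_Suc)
  finally show ?case .
qed

lemma char_poly_companion_mat_coeff:
  assumes "monic p"
  shows "char_poly (companion_mat (degree p) (coeff p)) = p"
proof -
  have "p = (\<Sum>i<Suc (degree p). monom (coeff p i) i)"
    by (simp add: lessThan_Suc_atMost poly_as_sum_of_monoms)
  also have "\<dots> = monom 1 (degree p) + (\<Sum>i<degree p. monom (coeff p i) i)"
    using assms by simp
  finally show ?thesis
    by (simp add: char_poly_companion_mat)
qed

lemma companion_mat_pow_eq_one_iff_dvd:
  fixes c :: "nat \<Rightarrow> 'a :: field_char_0"
  assumes "0 < m"
    and "companion_mat m c ^\<^sub>m N *\<^sub>v unit_vec m 0 = (-1) \<cdot>\<^sub>v unit_vec m 0"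
    and "\<And>s. 0 < s \<Longrightarrow> s < N \<Longrightarrow> companion_mat m c ^\<^sub>m s *\<^sub>v unit_vec m 0 \<noteq> unit_vec m 0
      \<and> companion_mat m c ^\<^sub>m s *\<^sub>v unit_vec m 0 \<noteq> (-1) \<cdot>\<^sub>v unit_vec m 0"
  shows "companion_mat m c ^\<^sub>m k = 1\<^sub>m m \<longleftrightarrow> 2 * N dvd k"
  using assms by (simp add: companion_mat_pow_eq_one_iff pow_mat_mult_vec_eq_self_iff[of _ m])

lemma companion_mat_X_pow_plus_one_pow_eq_one_iff:
  fixes k r :: nat
  assumes "0 < r"
  shows "companion_mat r (coeff (monom 1 r + 1 :: 'a :: field_char_0 poly)) ^\<^sub>m k = 1\<^sub>m r
    \<longleftrightarrow> 2 * r dvd k"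
proof (rule companion_mat_pow_eq_one_iff_dvd[OF assms])
  let ?C = "companion_mat r (coeff (monom 1 r + 1 :: 'a poly))"
  have "vec r (coeff (monom 1 r + 1 :: 'a poly)) = unit_vec r 0"
    by (auto simp: coeff_monom intro!: eq_vecI)
  then show "?C ^\<^sub>m r *\<^sub>v unit_vec r 0 = (-1) \<cdot>\<^sub>v unit_vec r 0"
    by (auto simp: companion_mat_pow_size_unit_vec intro!: eq_vecI)
  show "?C ^\<^sub>m s *\<^sub>v unit_vec r 0 \<noteq> unit_vec r 0 \<and> ?C ^\<^sub>m s *\<^sub>v unit_vec r 0 \<noteq> (-1) \<cdot>\<^sub>v unit_vec r 0"
    if "0 < s" "s < r" for s
    using that by (simp add: companion_mat_pow_unit_vec neq_unit_vec_0_if_index)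
qed

lemma degree_monom_plus_one:
  assumes "0 < r"
  shows "degree (monom 1 r + 1 :: 'a :: comm_ring_1 poly) = r"
  using assms by (subst degree_add_eq_left) (simp_all add: degree_monom_eq)

lemma monic_monom_plus_one:
  assumes "0 < r"
  shows "monic (monom 1 r + 1 :: 'a :: comm_ring_1 poly)"
  using assms by (simp add: degree_monom_plus_one)

lemma seven_block_poly_expand:
  "[:1, 1:] * (monom 1 6 - monom 1 3 + 1) = ([:1, 1, 0, -1, -1, 0, 1, 1:] :: 'a :: comm_ring_1 poly)"
  by (simp add: monom_altdef numeral_eq_Suc one_pCons)

lemma companion_mat_seven_block_pow_eq_one_iff:
  "companion_mat 7 (coeff ([:1, 1, 0, -1, -1, 0, 1, 1:] :: 'a :: field_char_0 poly)) ^\<^sub>m k = 1\<^sub>m 7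
    \<longleftrightarrow> 18 dvd k"
proof -
  let ?C = "companion_mat 7 (coeff ([:1, 1, 0, -1, -1, 0, 1, 1:] :: 'a poly))"
  let ?e = "unit_vec 7 0 :: 'a vec"
  have pow7: "?C ^\<^sub>m 7 *\<^sub>v ?e = vec 7 (\<lambda>i. [-1, -1, 0, 1, 1, 0, -1] ! i)"
    unfolding companion_mat_pow_size_unit_vec by (rule eq_vecI) (auto simp: eval_nat_numeral less_Suc_eq)
  have step: "?C ^\<^sub>m Suc k *\<^sub>v ?e = ?C *\<^sub>v (?C ^\<^sub>m k *\<^sub>v ?e)" for k
    by (rule pow_mat_Suc_mult_vec[of _ 7]) simp_all
  have "?C ^\<^sub>m 8 *\<^sub>v ?e = ?C *\<^sub>v vec 7 (\<lambda>i. [-1, -1, 0, 1, 1, 0, -1] ! i)"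
    using step[of 7] pow7 by simp
  also have "\<dots> = vec 7 (\<lambda>i. [1, 0, -1, -1, 0, 1, 1] ! i)"
    by (rule eq_vecI)
      (auto simp del: index_mult_mat_vec simp add: companion_mat_mult_vec eval_nat_numeral less_Suc_eq)
  finally have pow8: "?C ^\<^sub>m 8 *\<^sub>v ?e = vec 7 (\<lambda>i. [1, 0, -1, -1, 0, 1, 1] ! i)" .
  have "?C ^\<^sub>m 9 *\<^sub>v ?e = ?C *\<^sub>v vec 7 (\<lambda>i. [1, 0, -1, -1, 0, 1, 1] ! i)"
    using step[of 8] pow8 by simp
  also have "\<dots> = (-1) \<cdot>\<^sub>v ?e"
    by (rule eq_vecI)
      (auto simp del: index_mult_mat_vec simp add: companion_mat_mult_vec eval_nat_numeral less_Suc_eq)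
  finally have pow9: "?C ^\<^sub>m 9 *\<^sub>v ?e = (-1) \<cdot>\<^sub>v ?e" .
  have early: "?C ^\<^sub>m s *\<^sub>v ?e \<noteq> ?e \<and> ?C ^\<^sub>m s *\<^sub>v ?e \<noteq> (-1) \<cdot>\<^sub>v ?e"
    if s: "0 < s" "s < 9" for s
  proof -
    consider "s < 7" | "s = 7" | "s = 8"
      using s by linarith
    then show ?thesis
    proof cases
      case 1
      then show ?thesis using s by (simp add: companion_mat_pow_unit_vec neq_unit_vec_0_if_index)
    next
      case 2
      then show ?thesis using neq_unit_vec_0_if_index[of 1 7 "?C ^\<^sub>m 7 *\<^sub>v ?e"] by (simp add: pow7)
    next
      case 3
      then show ?thesis using neq_unit_vec_0_if_index[of 2 7 "?C ^\<^sub>m 8 *\<^sub>v ?e"] by (simp add: pow8)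
    qed
  qed
  show ?thesis
    using companion_mat_pow_eq_one_iff_dvd[of 7 _ 9, OF _ pow9 early] by simp
qed

definition sparse_col_mat :: "nat \<Rightarrow> (nat \<Rightarrow> (nat \<times> 'a) list) \<Rightarrow> 'a :: comm_ring_1 mat" where
  "sparse_col_mat n f = mat n n (\<lambda>(i, k). sum_list (map (\<lambda>(a, x). if a = i then x else 0) (f k)))"

lemma sparse_col_mat_carrier [simp]: "sparse_col_mat n f \<in> carrier_mat n n"
  by (simp add: sparse_col_mat_def)

lemma sparse_col_mat_dim [simp]:
  "dim_row (sparse_col_mat n f) = n" "dim_col (sparse_col_mat n f) = n"
  by (simp_all add: sparse_col_mat_def)

lemma sparse_col_mat_index:
  "i < n \<Longrightarrow> k < n \<Longrightarrow> sparse_col_mat n f $$ (i, k) = sum_list (map (\<lambda>(a, x). if a = i then x else 0) (f k))"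
  by (simp add: sparse_col_mat_def)

lemma sum_mult_sum_list_delta:
  fixes n :: nat and l :: "(nat \<times> 'a :: comm_ring_1) list"
  shows "(\<Sum>i<n. g i * sum_list (map (\<lambda>(a, x). if a = i then x else 0) l))
    = sum_list (map (\<lambda>(a, x). if a < n then x * g a else 0) l)"
proof (induction l)
  case (Cons p l)
  obtain a x where p: "p = (a, x)" by fastforce
  have "(\<Sum>i<n. g i * sum_list (map (\<lambda>(a, x). if a = i then x else 0) (p # l)))
      = (\<Sum>i<n. if a = i then x * g i else 0) + (\<Sum>i<n. g i * sum_list (map (\<lambda>(a, x). if a = i then x else 0) l))"
    unfolding p by (simp add: distrib_left sum.distrib mult.commute if_distrib[of "\<lambda>y. _ * y"] cong: if_cong)
  then show ?case
    using Cons p by simp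
qed simp

lemma scalar_prod_col_sparse_col_mat:
  assumes "w \<in> carrier_vec n" and "k < n"
  shows "w \<bullet> col (sparse_col_mat n f) k = sum_list (map (\<lambda>(a, x). if a < n then x * w $ a else 0) (f k))"
  using assms by (simp add: scalar_prod_def sparse_col_mat_index atLeast0LessThan sum_mult_sum_list_delta)

lemma mult_sparse_col_mat_index:
  assumes "A \<in> carrier_mat nr n" and "i < nr" and "k < n"
  shows "(A * sparse_col_mat n f) $$ (i, k) = sum_list (map (\<lambda>(a, x). if a < n then x * A $$ (i, a) else 0) (f k))"
proof -
  have "(A * sparse_col_mat n f) $$ (i, k) = sum_list (map (\<lambda>(a, x). if a < n then x * row A i $ a else 0) (f k))"
    using assms by (simp add: scalar_prod_col_sparse_col_mat)
  also have "\<dots> = sum_list (map (\<lambda>(a, x). if a < n then x * A $$ (i, a) else 0) (f k))"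
    using assms by (intro arg_cong[where f = sum_list] map_cong) auto
  finally show ?thesis .
qed

lemma col_sparse_col_mat_scalar_prod:
  assumes "v \<in> carrier_vec n" and "k < n"
  shows "col (sparse_col_mat n f) k \<bullet> v = sum_list (map (\<lambda>(a, x). if a < n then x * v $ a else 0) (f k))"
  using assms by (simp add: comm_scalar_prod[of _ n] scalar_prod_col_sparse_col_mat)

section \<open>The Coxeter matrix of N_n(r) for n \<le> 2r\<close>

lemma nakayama_cartan_dim [simp]:
  "dim_row (nakayama_cartan n r) = n" "dim_col (nakayama_cartan n r) = n"
  by (simp_all add: nakayama_cartan_def)

lemma nakayama_cartan_carrier [simp]: "nakayama_cartan n r \<in> carrier_mat n n"
  by (simp add: carrier_matI)

lemma nakayama_cartan_index:
  "a < n \<Longrightarrow> j < n \<Longrightarrow> nakayama_cartan n r $$ (a, j) = (if a \<le> j \<and> j < a + r then 1 else 0)"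
  by (auto simp: nakayama_cartan_def)

text \<open>The transposed Cartan matrix is 1 + S + ... + S^(r-1) = (1 - S^r)(1 - S)^(-1) for the shift
  matrix S with ones below the diagonal; as S^(2r) = 0 when n \<le> 2r, its inverse is (1 - S)(1 + S^r).\<close>

definition nakayama_cartan_transpose_inv :: "nat \<Rightarrow> nat \<Rightarrow> rat mat" where
  "nakayama_cartan_transpose_inv n r = mat n n (\<lambda>(i, k).
     (if k = i then 1 else 0) - (if k + 1 = i then 1 else 0)
     + (if k + r = i then 1 else 0) - (if k + (r + 1) = i then 1 else 0))"

lemma nakayama_cartan_transpose_inv_mult_index:
  assumes M: "M \<in> carrier_mat n nc" and i: "i < n" and j: "j < nc"
  shows "(nakayama_cartan_transpose_inv n r * M) $$ (i, j)
    = M $$ (i, j) - (if 1 \<le> i then M $$ (i - 1, j) else 0)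
      + (if r \<le> i then M $$ (i - r, j) else 0) - (if r + 1 \<le> i then M $$ (i - (r + 1), j) else 0)"
proof -
  have "(nakayama_cartan_transpose_inv n r * M) $$ (i, j)
    = (\<Sum>k<n. (if k + 0 = i then M $$ (k, j) else 0) - (if k + 1 = i then M $$ (k, j) else 0)
      + (if k + r = i then M $$ (k, j) else 0) - (if k + (r + 1) = i then M $$ (k, j) else 0))"
    using M i j by (auto simp: nakayama_cartan_transpose_inv_def scalar_prod_def atLeast0LessThan
        intro!: sum.cong)
  also have "\<dots> = (\<Sum>k<n. if k + 0 = i then M $$ (k, j) else 0) - (\<Sum>k<n. if k + 1 = i then M $$ (k, j) else 0)
      + (\<Sum>k<n. if k + r = i then M $$ (k, j) else 0) - (\<Sum>k<n. if k + (r + 1) = i then M $$ (k, j) else 0)"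
    by (simp only: sum.distrib sum_subtractf)
  also have "\<dots> = M $$ (i, j) - (if 1 \<le> i then M $$ (i - 1, j) else 0)
      + (if r \<le> i then M $$ (i - r, j) else 0) - (if r + 1 \<le> i then M $$ (i - (r + 1), j) else 0)"
    using i by (simp only: sum_lessThan_if_add_eq trans_less_add1) simp
  finally show ?thesis .
qed

lemma nakayama_cartan_transpose_inv_mult:
  assumes "n \<le> 2 * r"
  shows "nakayama_cartan_transpose_inv n r * transpose_mat (nakayama_cartan n r) = 1\<^sub>m n"
proof (rule eq_matI)
  fix i j assume "i < dim_row (1\<^sub>m n)" "j < dim_col (1\<^sub>m n)"
  then have i: "i < n" and j: "j < n" by simp_all
  have "(nakayama_cartan_transpose_inv n r * transpose_mat (nakayama_cartan n r)) $$ (i, j)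
    = (if j \<le> i \<and> i < j + r then 1 else 0) - (if j + 1 \<le> i \<and> i < j + r + 1 then 1 else 0)
      + (if j + r \<le> i then 1 else 0) - (if j + r + 1 \<le> i then 1 else 0)"
    using i j assms
    by (subst nakayama_cartan_transpose_inv_mult_index[of _ n n]) (auto simp: nakayama_cartan_index)
  also have "\<dots> = 1\<^sub>m n $$ (i, j)"
    using i j by (cases "i = j"; cases "j < i"; cases "j + r \<le> i"; simp)
  finally show "(nakayama_cartan_transpose_inv n r * transpose_mat (nakayama_cartan n r)) $$ (i, j)
    = 1\<^sub>m n $$ (i, j)" .
qed (simp_all add: nakayama_cartan_transpose_inv_def)

definition nakayama_coxeter :: "nat \<Rightarrow> nat \<Rightarrow> rat mat" where
  "nakayama_coxeter n r = mat n n (\<lambda>(i, j).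
     if r \<le> j + 1 then - (if i + r = j + 1 then 1 else 0)
     else (if i = j + 1 then 1 else 0) - (if i = 0 then 1 else 0) - (if i = r then 1 else 0)
       + (if i = j + r + 1 then 1 else 0))"

lemma nakayama_coxeter_index:
  assumes "i < n" and "j < n"
  shows "nakayama_coxeter n r $$ (i, j) =
     (if r \<le> j + 1 then - (if i + r = j + 1 then 1 else 0)
      else (if i = j + 1 then 1 else 0) - (if i = 0 then 1 else 0) - (if i = r then 1 else 0)
        + (if i = j + r + 1 then 1 else 0))"
  using assms by (simp add: nakayama_coxeter_def)

lemma coxeter_matrix_nakayama_cartan:
  assumes "n \<le> 2 * r"
  shows "coxeter_matrix (nakayama_cartan n r) = nakayama_coxeter n r"
proof -
  let ?C = "nakayama_cartan n r" and ?T = "nakayama_cartan_transpose_inv n r"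
  have T: "?T \<in> carrier_mat n n"
    by (simp add: nakayama_cartan_transpose_inv_def)
  have "mat_inverse (transpose_mat ?C) = Some ?T"
    using T nakayama_cartan_transpose_inv_mult[OF assms] by (intro mat_inverse_eq_SomeI) auto
  moreover have "- (?T * ?C) = nakayama_coxeter n r"
  proof (rule eq_matI)
    fix i j assume "i < dim_row (nakayama_coxeter n r)" "j < dim_col (nakayama_coxeter n r)"
    then have i: "i < n" and j: "j < n" by (simp_all add: nakayama_coxeter_def)
    have "(?T * ?C) $$ (i, j)
      = (if i \<le> j \<and> j < i + r then 1 else 0) - (if 1 \<le> i \<and> i \<le> j + 1 \<and> j + 1 < i + r then 1 else 0)
        + (if r \<le> i \<and> i \<le> j + r \<and> j < i then 1 else 0) - (if r + 1 \<le> i \<and> i \<le> j + r + 1 \<and> j + 1 < i then 1 else 0)"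
      using i j by (subst nakayama_cartan_transpose_inv_mult_index[of _ n n]) (auto simp: nakayama_cartan_index)
    also have "- \<dots> = nakayama_coxeter n r $$ (i, j)"
      using i j assms unfolding nakayama_coxeter_def
      by (cases "r \<le> j + 1"; cases "i = 0"; cases "i < r"; cases "i = r"; simp)
    finally show "(- (?T * ?C)) $$ (i, j) = nakayama_coxeter n r $$ (i, j)"
      using i j T by simp
  qed (use T in \<open>simp_all add: nakayama_coxeter_def\<close>)
  ultimately show ?thesis
    by (simp add: coxeter_matrix_def)
qed

section \<open>The case n = r + 7\<close>

text \<open>Columns 0, ..., r - 1 are the orbit of e_7 - e_6 under the Coxeter matrix and columns
  r, ..., r + 6 the orbit of e_0 + e_r.\<close>

definition nakayama_cyclic_basis_cols :: "nat \<Rightarrow> nat \<Rightarrow> (nat \<times> rat) list" where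
  "nakayama_cyclic_basis_cols r k =
    (if k + 6 < r then [(k + 7, 1), (k + 6, -1)]
     else if k + 6 = r then [(0, 1), (1, -1)]
     else if k + 5 = r then [(1, 1), (2, -1), (r + 1, 1), (r + 2, -1)]
     else if k + 4 = r then [(r + 2, 1), (r + 3, -1)]
     else if k + 3 = r then [(4, 1), (3, -1)]
     else if k + 2 = r then [(5, 1), (4, -1), (r + 5, 1), (r + 4, -1)]
     else if k + 1 = r then [(r + 6, 1), (r + 5, -1)]
     else if k = r then [(0, 1), (r, 1)]
     else if k = r + 1 then [(0, -1), (r, -1), (r + 1, 1)]
     else if k = r + 2 then [(0, 1), (r, 1), (r + 1, -1), (2, -1)]
     else if k = r + 3 then [(r + 1, 1), (2, 1), (3, -1), (r + 3, -1)]
     else if k = r + 4 then [(2, -1), (3, 1), (r + 3, 1), (r + 4, -1)]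
     else if k = r + 5 then [(3, -1), (r + 3, -1), (r + 4, 1), (5, 1)]
     else [(r + 4, -1), (5, -1), (6, 1), (r + 6, 1)])"

definition nakayama_cyclic_basis :: "nat \<Rightarrow> rat mat" where
  "nakayama_cyclic_basis r = sparse_col_mat (r + 7) (nakayama_cyclic_basis_cols r)"

definition nakayama_companion_blocks :: "nat \<Rightarrow> rat mat" where
  "nakayama_companion_blocks r = four_block_mat
     (companion_mat r (coeff (monom 1 r + 1))) (0\<^sub>m r 7)
     (0\<^sub>m 7 r) (companion_mat 7 (coeff [:1, 1, 0, -1, -1, 0, 1, 1:]))"

lemma nakayama_companion_blocks_sparse:
  shows "nakayama_companion_blocks r = sparse_col_mat (r + 7) (\<lambda>k.
     if k + 1 < r then [(k + 1, 1)] else if k + 1 = r then [(0, -1)]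
     else if k < r + 6 then [(k + 1, 1)]
     else [(r, -1), (r + 1, -1), (r + 3, 1), (r + 4, 1), (r + 6, -1)])"
    (is "_ = sparse_col_mat _ ?cols")
proof (rule eq_matI)
  fix i k assume "i < dim_row (sparse_col_mat (r + 7) ?cols)" and "k < dim_col (sparse_col_mat (r + 7) ?cols)"
  then have i: "i < r + 7" and k: "k < r + 7" by simp_all
  show "nakayama_companion_blocks r $$ (i, k) = sparse_col_mat (r + 7) ?cols $$ (i, k)"
  proof (cases "k < r + 6")
    case True
    then show ?thesis
      using i k by (auto simp: nakayama_companion_blocks_def sparse_col_mat_index companion_mat_def coeff_monom)
  next
    case False
    then have "k = r + 6" using k by simp
    moreover have "i < r \<or> i - r < 7" using i by linarith
    ultimately show ?thesis
      using i by (auto simp: nakayama_companion_blocks_def sparse_col_mat_index companion_mat_def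
          eval_nat_numeral less_Suc_eq)
  qed
qed (simp_all add: nakayama_companion_blocks_def)

text \<open>Writing r = m + 9 lets simp decide the case distinctions of nakayama_cyclic_basis_cols.\<close>

lemma nakayama_coxeter_cyclic_basis_index:
  assumes i: "i < m + 9 + 7" and k: "k < m + 9 + 7"
  shows "(nakayama_coxeter (m + 9 + 7) (m + 9) * nakayama_cyclic_basis (m + 9)) $$ (i, k)
    = (nakayama_cyclic_basis (m + 9) * nakayama_companion_blocks (m + 9)) $$ (i, k)"
proof -
  have Phi: "nakayama_coxeter (m + 9 + 7) (m + 9) \<in> carrier_mat (m + 9 + 7) (m + 9 + 7)"
    by (simp add: nakayama_coxeter_def)
  have P: "nakayama_cyclic_basis (m + 9) = sparse_col_mat (m + 9 + 7) (nakayama_cyclic_basis_cols (m + 9))"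
    by (simp add: nakayama_cyclic_basis_def)
  note sparse_products = P nakayama_companion_blocks_sparse
    mult_sparse_col_mat_index[OF Phi i k] mult_sparse_col_mat_index[OF sparse_col_mat_carrier i k]
  show ?thesis
  proof (cases "k < m + 1")
    case True
    then have "nakayama_cyclic_basis_cols (m + 9) k = [(k + 7, 1), (k + 6, -1)]"
      and "nakayama_cyclic_basis_cols (m + 9) (k + 1) = [(k + 8, 1), (k + 7, -1)]"
      by (simp_all add: nakayama_cyclic_basis_cols_def)
    then show ?thesis
      using i True unfolding sparse_products
      by (simp add: nakayama_coxeter_index sparse_col_mat_index)
  next
    case False
    define s where "s = k - (m + 1)"
    have k_eq: "k = m + 1 + s" and "s < 15"
      using False k unfolding s_def by linarith+
    then have "s = 0 \<or> s = 1 \<or> s = 2 \<or> s = 3 \<or> s = 4 \<or> s = 5 \<or> s = 6 \<or> s = 7 \<or> s = 8 \<or> s = 9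
      \<or> s = 10 \<or> s = 11 \<or> s = 12 \<or> s = 13 \<or> s = 14"
      by arith
    then show ?thesis
      using i unfolding sparse_products unfolding k_eq
      by (elim disjE) (simp_all add: nakayama_coxeter_index sparse_col_mat_index nakayama_cyclic_basis_cols_def)
  qed
qed

lemma nakayama_coxeter_cyclic_basis:
  assumes "r \<ge> 9"
  shows "nakayama_coxeter (r + 7) r * nakayama_cyclic_basis r
    = nakayama_cyclic_basis r * nakayama_companion_blocks r"
proof -
  obtain m where r: "r = m + 9"
    using assms by (metis add.commute le_Suc_ex)
  show ?thesis
    unfolding r using nakayama_coxeter_cyclic_basis_index
    by (intro eq_matI) (simp_all add: nakayama_cyclic_basis_def nakayama_coxeter_def nakayama_companion_blocks_sparse)
qed

lemma nakayama_cyclic_basis_transpose_kernel: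
  fixes v :: "rat vec"
  assumes v: "v \<in> carrier_vec (m + 9 + 7)"
    and ker: "transpose_mat (nakayama_cyclic_basis (m + 9)) *\<^sub>v v = 0\<^sub>v (m + 9 + 7)"
  shows "v = 0\<^sub>v (m + 9 + 7)"
proof -
  have eq: "sum_list (map (\<lambda>(a, x). if a < m + 9 + 7 then x * v $ a else 0) (nakayama_cyclic_basis_cols (m + 9) k)) = 0"
    if "k < m + 9 + 7" for k
    using arg_cong[OF ker, of "\<lambda>w. w $ k"] that v
    by (simp add: nakayama_cyclic_basis_def col_sparse_col_mat_scalar_prod)
  have chain: "v $ (k + 7) = v $ (k + 6)" if "k < m + 3" for k
    using eq[of k] that by (simp add: nakayama_cyclic_basis_cols_def add.commute)
  have const: "v $ (6 + j) = v $ 6" if "j \<le> m + 3" for j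
    using that by (induction j) (auto simp: chain[simplified add.commute] add.commute)
  have e0: "v $ 0 - v $ 1 = 0"
    using eq[of "m + 3"] by (simp add: nakayama_cyclic_basis_cols_def add.commute)
  have e1: "v $ 1 - v $ 2 + v $ (m + 10) - v $ (m + 11) = 0"
    using eq[of "m + 4"] by (simp add: nakayama_cyclic_basis_cols_def add.commute)
  have e2: "v $ (m + 11) - v $ (m + 12) = 0"
    using eq[of "m + 5"] by (simp add: nakayama_cyclic_basis_cols_def add.commute)
  have e3: "v $ 4 - v $ 3 = 0"
    using eq[of "m + 6"] by (simp add: nakayama_cyclic_basis_cols_def add.commute)
  have e4: "v $ 5 - v $ 4 + v $ (m + 14) - v $ (m + 13) = 0"
    using eq[of "m + 7"] by (simp add: nakayama_cyclic_basis_cols_def add.commute)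
  have e5: "v $ (m + 15) - v $ (m + 14) = 0"
    using eq[of "m + 8"] by (simp add: nakayama_cyclic_basis_cols_def add.commute)
  have e6: "v $ 0 + v $ (m + 9) = 0"
    using eq[of "m + 9"] by (simp add: nakayama_cyclic_basis_cols_def add.commute)
  have e7: "- v $ 0 - v $ (m + 9) + v $ (m + 10) = 0"
    using eq[of "m + 10"] by (simp add: nakayama_cyclic_basis_cols_def add.commute)
  have e8: "v $ 0 + v $ (m + 9) - v $ (m + 10) - v $ 2 = 0"
    using eq[of "m + 11"] by (simp add: nakayama_cyclic_basis_cols_def add.commute)
  have e9: "v $ (m + 10) + v $ 2 - v $ 3 - v $ (m + 12) = 0"
    using eq[of "m + 12"] by (simp add: nakayama_cyclic_basis_cols_def add.commute)
  have e10: "- v $ 2 + v $ 3 + v $ (m + 12) - v $ (m + 13) = 0"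
    using eq[of "m + 13"] by (simp add: nakayama_cyclic_basis_cols_def add.commute)
  have e11: "- v $ 3 - v $ (m + 12) + v $ (m + 13) + v $ 5 = 0"
    using eq[of "m + 14"] by (simp add: nakayama_cyclic_basis_cols_def add.commute)
  have e12: "- v $ (m + 13) - v $ 5 + v $ 6 + v $ (m + 15) = 0"
    using eq[of "m + 15"] by (simp add: nakayama_cyclic_basis_cols_def add.commute)
  have "v $ (m + 9) = v $ 6" using const[of "m + 3"] by (simp add: add.commute)
  then have zero: "v $ 0 = 0" "v $ 1 = 0" "v $ 2 = 0" "v $ 3 = 0" "v $ 4 = 0" "v $ 5 = 0" "v $ 6 = 0"
    "v $ (m + 10) = 0" "v $ (m + 11) = 0" "v $ (m + 12) = 0" "v $ (m + 13) = 0" "v $ (m + 14) = 0" "v $ (m + 15) = 0"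
    using e0 e1 e2 e3 e4 e5 e6 e7 e8 e9 e10 e11 e12 by linarith+
  show ?thesis
  proof (rule eq_vecI)
    fix i assume "i < dim_vec (0\<^sub>v (m + 9 + 7) :: rat vec)"
    then have i: "i < m + 16" by simp
    show "v $ i = 0\<^sub>v (m + 9 + 7) $ i"
    proof (cases "6 \<le> i \<and> i \<le> m + 9")
      case True
      then have "i - 6 \<le> m + 3" by linarith
      then show ?thesis
        using const[of "i - 6"] zero(7) True i by simp
    next
      case False
      then have "i \<in> {0, 1, 2, 3, 4, 5, m + 10, m + 11, m + 12, m + 13, m + 14, m + 15}"
        using i by auto
      then show ?thesis
        using zero i by auto
    qed
  qed (use v in simp)
qed

lemma det_nakayama_cyclic_basis:
  assumes "r \<ge> 9"
  shows "det (nakayama_cyclic_basis r) \<noteq> 0"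
proof
  obtain m where r: "r = m + 9"
    using assms by (metis add.commute le_Suc_ex)
  have P: "nakayama_cyclic_basis r \<in> carrier_mat (r + 7) (r + 7)"
    by (simp add: nakayama_cyclic_basis_def)
  assume "det (nakayama_cyclic_basis r) = 0"
  then have "det (transpose_mat (nakayama_cyclic_basis r)) = 0"
    using P by (simp add: det_transpose)
  then obtain v where "v \<in> carrier_vec (r + 7)" "v \<noteq> 0\<^sub>v (r + 7)"
    "transpose_mat (nakayama_cyclic_basis r) *\<^sub>v v = 0\<^sub>v (r + 7)"
    using P det_0_iff_vec_prod_zero_field[of "transpose_mat (nakayama_cyclic_basis r)" "r + 7"] by auto
  then show False
    unfolding r using nakayama_cyclic_basis_transpose_kernel by blast
qed

lemma similar_coxeter_matrix_nakayama:
  assumes "r \<ge> 9"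
  shows "similar_mat (coxeter_matrix (nakayama_cartan (r + 7) r)) (nakayama_companion_blocks r)"
proof -
  have "coxeter_matrix (nakayama_cartan (r + 7) r) = nakayama_coxeter (r + 7) r"
    using assms by (intro coxeter_matrix_nakayama_cartan) simp
  then show ?thesis
    using assms nakayama_coxeter_cyclic_basis det_nakayama_cyclic_basis
    by (intro similar_mat_if_mult_eq[where n = "r + 7" and P = "nakayama_cyclic_basis r"])
      (simp_all add: nakayama_coxeter_def nakayama_cyclic_basis_def nakayama_companion_blocks_sparse)
qed

lemma char_poly_nakayama_companion_blocks:
  assumes "0 < r"
  shows "char_poly (nakayama_companion_blocks r) = (monom 1 r + 1) * [:1, 1, 0, -1, -1, 0, 1, 1:]"
proof -
  have "degree ([:1, 1, 0, -1, -1, 0, 1, 1:] :: rat poly) = 7" "monic ([:1, 1, 0, -1, -1, 0, 1, 1:] :: rat poly)"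
    by simp_all
  then have "char_poly (companion_mat 7 (coeff ([:1, 1, 0, -1, -1, 0, 1, 1:] :: rat poly)))
      = [:1, 1, 0, -1, -1, 0, 1, 1:]"
    using char_poly_companion_mat_coeff by metis
  moreover have "char_poly (companion_mat r (coeff (monom 1 r + 1 :: rat poly))) = monom 1 r + 1"
    using char_poly_companion_mat_coeff degree_monom_plus_one[OF assms] monic_monom_plus_one[OF assms]
    by metis
  ultimately show ?thesis
    unfolding nakayama_companion_blocks_def by (simp add: char_poly_four_block_diag)
qed

lemma nakayama_companion_blocks_pow_eq_one_iff:
  assumes "0 < r"
  shows "nakayama_companion_blocks r ^\<^sub>m k = 1\<^sub>m (r + 7) \<longleftrightarrow> lcm (2 * r) 9 dvd k"
proof -
  have "nakayama_companion_blocks r ^\<^sub>m k = 1\<^sub>m (r + 7) \<longleftrightarrow> 2 * r dvd k \<and> 18 dvd k"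
    unfolding nakayama_companion_blocks_def
    by (simp add: pow_four_block_diag_eq_one_iff companion_mat_X_pow_plus_one_pow_eq_one_iff[OF assms]
        companion_mat_seven_block_pow_eq_one_iff)
  also have "\<dots> \<longleftrightarrow> 2 * r dvd k \<and> 9 dvd k"
  proof -
    have "18 dvd k \<longleftrightarrow> 2 dvd k \<and> 9 dvd k"
      by presburger
    then show ?thesis
      by (auto dest: dvd_mult_left)
  qed
  also have "\<dots> \<longleftrightarrow> lcm (2 * r) 9 dvd k"
    by (simp add: lcm_least_iff)
  finally show ?thesis .
qed

lemma is_coxeter_numberI:
  assumes "0 < m" and "\<And>k. coxeter_matrix C ^\<^sub>m k = 1\<^sub>m (dim_row C) \<longleftrightarrow> m dvd k"
  shows "is_coxeter_number C m"
  using assms by (auto simp: is_coxeter_number_def dest: nat_dvd_not_less)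

theorem proposition6p1:
  fixes r :: nat
  assumes "r \<ge> 9"
  shows "coxeter_polynomial (nakayama_cartan (r + 7) r) =
           ([:1, 1:] * (monom 1 6 - monom 1 3 + 1) * (monom 1 r + 1))
       \<and> is_coxeter_number (nakayama_cartan (r + 7) r) (lcm (2 * r) 9)"
proof
  let ?C = "nakayama_cartan (r + 7) r"
  have r: "0 < r"
    using assms by simp
  have sim: "similar_mat (coxeter_matrix ?C) (nakayama_companion_blocks r)"
    using assms by (rule similar_coxeter_matrix_nakayama)
  have dim: "dim_row (coxeter_matrix ?C) = r + 7"
    using assms by (simp add: coxeter_matrix_nakayama_cartan nakayama_coxeter_def)
  have "coxeter_polynomial ?C = (monom 1 r + 1) * [:1, 1, 0, -1, -1, 0, 1, 1:]"
    unfolding coxeter_polynomial_def char_poly_similar[OF sim] by (rule char_poly_nakayama_companion_blocks[OF r])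
  then show "coxeter_polynomial ?C = [:1, 1:] * (monom 1 6 - monom 1 3 + 1) * (monom 1 r + 1)"
    unfolding seven_block_poly_expand by (simp only: mult.commute)
  show "is_coxeter_number ?C (lcm (2 * r) 9)"
    using similar_mat_pow_eq_one_iff[OF sim] r
    by (intro is_coxeter_numberI) (simp_all add: dim nakayama_companion_blocks_pow_eq_one_iff lcm_pos_nat)
qed

end
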